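(* Let $\kappa>0$, $b>0$, $m>7/2$, and let $n\in\mathfrak D\cap H^m(C(\pi))$ with $\|n\|_{H^m}\le C_m$. Then the matrix function $\mathcal Q$ associated with $n$ satisfies $$\|\mathcal Q(x)\|_2\le15(1+\kappa^2)\,b^{-2}(L_mC_m)^2\qquad\text{for all }x\in B(\pi),$$ where $\|\cdot\|_2$ is the spectral norm on $\mathbb C^{6\times6}$.
   Context: $B(r)$ is the open ball of radius $r$ about $0$ in $\mathbb R^3$, $C(\pi)=(-\pi,\pi)^3$. For a fixed $\alpha_0\in(0,1)$, $\mathfrak D:=\{n\in C^{1,\alpha_0}(\mathbb R^3;\mathbb C):\ \mathrm{supp}(1-n)\subset B(\pi),\ \mathrm{Re}(n)\ge b,\ \mathrm{Im}(n)\ge0\}$. For $f$ on $C(\pi)$, $\hat f(\gamma)=(2\pi)^{-3/2}\int_{C(\pi)}f(x)e^{-i\gamma\cdot x}dx$ and $\|f\|^2_{H^m}:=\sum_{\gamma\in\mathbb Z^3}(1+|\gamma|^2)^m|\hat f(\gamma)|^2$. $L_m$ is a constant with $L_m\|f\|_{H^m(C(\pi))}\ge\max_{|\alpha|\le2}\sup_{x\in C(\pi)}|\partial^\alpha f(x)|$ for all $f\in H^m(C(\pi))$. The matrix $\mathcal Q(x)\in\mathbb C^{6\times6}$ is $$\mathcal Q=\kappa^2(1-n)1_6+\frac{i\kappa}{\sqrt n}\begin{pmatrix}0_3&-(\nabla n\times)\\(\nabla n\times)&0_3\end{pmatrix}+\begin{pmatrix}-D\big(\frac{\nabla n}{n}\big)+(n^{-1/2}\Delta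 n^{1/2})1_3&0_3\\0_3&0_3\end{pmatrix},$$ where $1_k,0_k$ are the $k\times k$ identity and zero matrices, $n^{1/2}$ is the principal square root, $D(V)$ is the Jacobian matrix of a vector field $V$, and $(\nabla n\times)$ is the matrix $\begin{pmatrix}0&-\partial_zn&\partial_yn\\\partial_zn&0&-\partial_xn\\-\partial_yn&\partial_xn&0\end{pmatrix}$. *)

theory Defs
  imports "HOL-Analysis.Analysis"
begin

definition cubeC :: "(real^3) set" where
  "cubeC = box (- (\<chi> i. pi)) (\<chi> i. pi)"

definition Z3 :: "(real^3) set" where
  "Z3 = {\<gamma>. \<forall>i. \<gamma> $ i \<in> \<int>}"

definition fcoeff :: "(real^3 \<Rightarrow> complex) \<Rightarrow> real^3 \<Rightarrow> complex" where
  "fcoeff f \<gamma> = complex_of_real ((2*pi) powr (-3/2)) *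
     integral cubeC (\<lambda>x. f x * exp (- \<i> * complex_of_real (\<gamma> \<bullet> x)))"

definition Hm_weight :: "real \<Rightarrow> (real^3 \<Rightarrow> complex) \<Rightarrow> real^3 \<Rightarrow> real" where
  "Hm_weight m f \<gamma> = (1 + (norm \<gamma>)\<^sup>2) powr m * (cmod (fcoeff f \<gamma>))\<^sup>2"

definition in_Hm :: "real \<Rightarrow> (real^3 \<Rightarrow> complex) \<Rightarrow> bool" where
  "in_Hm m f \<longleftrightarrow> f measurable_on cubeC \<and>
     (\<lambda>x. (cmod (f x))\<^sup>2) integrable_on cubeC \<and>
     Hm_weight m f summable_on Z3"

definition Hm_norm :: "real \<Rightarrow> (real^3 \<Rightarrow> complex) \<Rightarrow> real" where
  "Hm_norm m f = sqrt (infsum (Hm_weight m f) Z3)"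

definition pd :: "3 \<Rightarrow> (real^3 \<Rightarrow> complex) \<Rightarrow> real^3 \<Rightarrow> complex" where
  "pd i f x = vector_derivative (\<lambda>t. f (x + t *\<^sub>R axis i 1)) (at 0)"

definition C1_fun :: "(real^3 \<Rightarrow> complex) \<Rightarrow> bool" where
  "C1_fun f \<longleftrightarrow> (\<forall>i x. (\<lambda>t. f (x + t *\<^sub>R axis i 1)) differentiable (at 0)) \<and>
     continuous_on UNIV f \<and> (\<forall>i. continuous_on UNIV (pd i f))"

definition C1alpha :: "real \<Rightarrow> (real^3 \<Rightarrow> complex) \<Rightarrow> bool" where
  "C1alpha \<alpha> f \<longleftrightarrow> C1_fun f \<and> bounded (range f) \<and> (\<forall>i. bounded (range (pd i f))) \<and>
     (\<exists>M. \<forall>i x y. cmod (pd i f x - pd i f y) \<le> M * (dist x y) powr \<alpha>)"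

definition C2_fun :: "(real^3 \<Rightarrow> complex) \<Rightarrow> bool" where
  "C2_fun f \<longleftrightarrow> C1_fun f \<and> (\<forall>j. C1_fun (pd j f))"

definition admissible :: "real \<Rightarrow> real \<Rightarrow> (real^3 \<Rightarrow> complex) \<Rightarrow> bool" where
  "admissible \<alpha>0 b n \<longleftrightarrow> C1alpha \<alpha>0 n \<and> closure {x. n x \<noteq> 1} \<subseteq> ball 0 pi \<and>
     (\<forall>x. Re (n x) \<ge> b \<and> Im (n x) \<ge> 0)"

definition sobolev_const :: "real \<Rightarrow> real \<Rightarrow> bool" where
  "sobolev_const m L \<longleftrightarrow> (\<forall>f. in_Hm m f \<and> C2_fun f \<longrightarrow>
     (\<forall>x\<in>cubeC. cmod (f x) \<le> L * Hm_norm m f \<and>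
        (\<forall>i. cmod (pd i f x) \<le> L * Hm_norm m f) \<and>
        (\<forall>i j. cmod (pd i (pd j f) x) \<le> L * Hm_norm m f)))"

definition grad :: "(real^3 \<Rightarrow> complex) \<Rightarrow> real^3 \<Rightarrow> complex^3" where
  "grad f x = (\<chi> i. pd i f x)"

definition jac :: "(real^3 \<Rightarrow> complex^3) \<Rightarrow> real^3 \<Rightarrow> complex^3^3" where
  "jac V x = (\<chi> k l. pd l (\<lambda>y. V y $ k) x)"

definition crossmat :: "complex^3 \<Rightarrow> complex^3^3" where
  "crossmat w = (\<chi> k l.
     if k = 1 \<and> l = 2 then - w$3 else if k = 1 \<and> l = 3 then w$2 else
     if k = 2 \<and> l = 1 then w$3 else if k = 2 \<and> l = 3 then - w$1 else
     if k = 3 \<and> l = 1 then - w$2 else if k = 3 \<and> l = 2 then w$1 else 0)"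

definition laplace :: "(real^3 \<Rightarrow> complex) \<Rightarrow> real^3 \<Rightarrow> complex" where
  "laplace f x = (\<Sum>i\<in>UNIV. pd i (pd i f) x)"

text \<open>The 6x6 matrix Q(x), written as a 2x2 block matrix of 3x3 blocks acting on
  C^6 = C^3 \<times> C^3 (Euclidean norm).\<close>
definition Qop :: "real \<Rightarrow> (real^3 \<Rightarrow> complex) \<Rightarrow> real^3 \<Rightarrow> (complex^3) \<times> (complex^3) \<Rightarrow> (complex^3) \<times> (complex^3)" where
  "Qop \<kappa> n x = (let
      d = complex_of_real (\<kappa>\<^sup>2) * (1 - n x);
      c = \<i> * complex_of_real \<kappa> / csqrt (n x);
      N = crossmat (grad n x);
      A11 = mat d + ((- jac (\<lambda>y. \<chi> k. grad n y $ k / n y) x)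
              + mat (laplace (\<lambda>y. csqrt (n y)) x / csqrt (n x)));
      A12 = (\<chi> k l. - c * N $ k $ l);
      A21 = (\<chi> k l. c * N $ k $ l);
      A22 = mat d
    in (\<lambda>(E, H). (A11 *v E + A12 *v H, A21 *v E + A22 *v H)))"

text \<open>Spectral norm of Q(x): operator norm w.r.t. the Euclidean norm on C^6 = C^3 \<times> C^3.\<close>
definition Q_spec_norm :: "real \<Rightarrow> (real^3 \<Rightarrow> complex) \<Rightarrow> real^3 \<Rightarrow> real" where
  "Q_spec_norm \<kappa> n x = onorm (Qop \<kappa> n x)"

end

theory Submission
  imports Defs
begin

text \<open>
  Each entry of \<open>\<Q>(x)\<close> is a rational expression in \<open>n\<close>, its first and second partial
  derivatives and \<open>n\<^sup>-\<^sup>1\<close>, \<open>n\<^sup>-\<^sup>1\<^sup>/\<^sup>2\<close>. On \<open>C(\<pi>)\<close> the derivatives are bounded by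
  \<open>M = L\<^sub>m C\<^sub>m\<close>, while \<open>|n| \<ge> Re n \<ge> b\<close> bounds the inverse powers by \<open>\<beta> = 1/b\<close>;
  a 3\<times>3 block whose entries are bounded by \<open>K\<close> has norm at most \<open>3K\<close>. Since \<open>n = 1\<close>
  at the corner \<open>(3,3,3)\<close> of \<open>C(\<pi>)\<close>, which lies outside \<open>B(\<pi>)\<close>, we also get \<open>b \<le> 1\<close>
  and \<open>M \<ge> 1\<close>, so all lower order terms are absorbed into \<open>15 (1 + \<kappa>\<^sup>2) \<beta>\<^sup>2 M\<^sup>2\<close>.
\<close>

lemma norm_mat_mult_vec:
  fixes x :: "'a::real_normed_div_algebra ^ 'n"
  shows "norm (mat d *v x) = norm d * norm x"
proof -
  have "mat d *v x = (\<chi> k. d * x $ k)"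
    by (simp add: vec_eq_iff matrix_vector_mult_def mat_def if_distrib if_distribR sum.delta cong: if_cong)
  then show ?thesis
    by (simp add: norm_vec_def norm_mult L2_set_right_distrib)
qed

lemma norm_matrix_vector_mult_le:
  fixes A :: "'a::real_normed_div_algebra ^ 'n ^ 'm"
  assumes "\<And>k l. norm (A $ k $ l) \<le> K"
  shows "norm (A *v x) \<le> sqrt (CARD('m) * CARD('n)) * K * norm x"
proof -
  have K: "0 \<le> K"
    using assms norm_ge_zero order_trans by blast
  have "norm ((A *v x) $ k) \<le> sqrt (CARD('n)) * K * norm x" for k
  proof -
    have "norm ((A *v x) $ k) \<le> (\<Sum>l\<in>UNIV. norm (A $ k $ l) * norm (x $ l))"
      unfolding matrix_vector_mult_def by (simp add: norm_mult order_trans[OF norm_sum])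
    also have "\<dots> \<le> (\<Sum>l\<in>UNIV. \<bar>K\<bar> * \<bar>norm (x $ l)\<bar>)"
      by (rule sum_mono) (simp add: mult_right_mono order_trans[OF assms abs_ge_self])
    also have "\<dots> \<le> L2_set (\<lambda>_. K) (UNIV :: 'n set) * norm x"
      unfolding norm_vec_def by (rule L2_set_mult_ineq)
    finally show ?thesis
      using K by (simp add: L2_set_constant)
  qed
  then have "norm (A *v x) \<le> L2_set (\<lambda>_. sqrt (CARD('n)) * K * norm x) (UNIV :: 'm set)"
    unfolding norm_vec_def[of "A *v x"] by (intro L2_set_mono) auto
  also have "\<dots> = sqrt (CARD('m) * CARD('n)) * K * norm x"
    using K by (simp add: L2_set_constant real_sqrt_mult)
  finally show ?thesis .
qed

lemma norm_block_le:
  fixes E :: "'a::real_normed_vector" and H :: "'b::real_normed_vector"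
    and A :: "'a \<Rightarrow> 'c::real_normed_vector" and B :: "'b \<Rightarrow> 'c"
    and C :: "'a \<Rightarrow> 'd::real_normed_vector" and D :: "'b \<Rightarrow> 'd"
  assumes "norm (A E) \<le> a * norm E" "norm (B H) \<le> b * norm H"
    and "norm (C E) \<le> c * norm E" "norm (D H) \<le> d * norm H"
    and "0 \<le> a" "0 \<le> b" "0 \<le> c" "0 \<le> d"
  shows "norm (A E + B H, C E + D H) \<le> (a + b + c + d) * norm (E, H)"
proof -
  have E: "norm E \<le> norm (E, H)" and H: "norm H \<le> norm (E, H)"
    by (rule norm_fst_le norm_snd_le)+
  have "norm (A E + B H, C E + D H) \<le> norm (A E + B H) + norm (C E + D H)"
    by (simp add: norm_prod_def sqrt_sum_squares_le_sum)
  also have "\<dots> \<le> a * norm E + b * norm H + (c * norm E + d * norm H)"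
    using assms(1-4) by (intro add_mono order_trans[OF norm_triangle_ineq]) auto
  also have "\<dots> \<le> (a + b + c + d) * norm (E, H)"
    using assms(5-8) E H mult_left_mono[OF E, of a] mult_left_mono[OF H, of b]
      mult_left_mono[OF E, of c] mult_left_mono[OF H, of d]
    by (simp add: distrib_right)
  finally show ?thesis .
qed

lemma norm_matrix3_vector_mult_le:
  fixes A :: "complex^3^3"
  assumes "\<And>k l. cmod (A $ k $ l) \<le> K"
  shows "norm (A *v x) \<le> 3 * K * norm x"
proof -
  have "sqrt (real (CARD(3) * CARD(3))) = 3"
    by (simp add: real_sqrt_eq_iff)
  then show ?thesis
    using norm_matrix_vector_mult_le[OF assms, of x] by simp
qed

abbreviation has_pd :: "(real^3 \<Rightarrow> complex) \<Rightarrow> 3 \<Rightarrow> complex \<Rightarrow> real^3 \<Rightarrow> bool" where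
  "has_pd f i D x \<equiv> ((\<lambda>t. f (x + t *\<^sub>R axis i 1)) has_vector_derivative D) (at 0)"

lemma has_pd_pd: "C1_fun f \<Longrightarrow> has_pd f i (pd i f x) x"
  unfolding C1_fun_def pd_def using vector_derivative_works by blast

lemma pd_eqI: "has_pd f i D x \<Longrightarrow> pd i f x = D"
  unfolding pd_def by (rule vector_derivative_at)

lemma has_pd_divide:
  assumes f: "has_pd f i f' x" and g: "has_pd g i g' x" and "g x \<noteq> 0"
  shows "has_pd (\<lambda>y. f y / g y) i ((f' * g x - f x * g') / (g x)\<^sup>2) x"
proof -
  have "(inverse has_field_derivative - inverse ((g x)\<^sup>2))
      (at ((\<lambda>t. g (x + t *\<^sub>R axis i 1)) 0))"
    using DERIV_inverse[OF \<open>g x \<noteq> 0\<close>] by (simp add: power2_eq_square)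
  from field_vector_diff_chain_at[OF g this]
  have "has_pd (\<lambda>y. inverse (g y)) i (g' * - inverse ((g x)\<^sup>2)) x"
    by (simp add: o_def)
  from has_vector_derivative_mult[OF f this] show ?thesis
    unfolding divide_inverse[of "f _"]
    by (rule has_vector_derivative_eq_rhs)
      (use \<open>g x \<noteq> 0\<close> in \<open>simp add: field_simps power2_eq_square\<close>)
qed

lemma has_pd_csqrt:
  assumes f: "has_pd f i f' x" and "f x \<notin> \<real>\<^sub>\<le>\<^sub>0"
  shows "has_pd (\<lambda>y. csqrt (f y)) i (f' / (2 * csqrt (f x))) x"
proof -
  have "(csqrt has_field_derivative inverse (2 * csqrt (f x)))
      (at ((\<lambda>t. f (x + t *\<^sub>R axis i 1)) 0))"
    using has_field_derivative_csqrt[OF \<open>f x \<notin> \<real>\<^sub>\<le>\<^sub>0\<close>] by simp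
  from field_vector_diff_chain_at[OF f this] show ?thesis
    by (simp only: o_def divide_inverse)
qed

lemma pd_divide:
  assumes "C1_fun f" "C1_fun g" "g x \<noteq> 0"
  shows "pd i (\<lambda>y. f y / g y) x = (pd i f x * g x - f x * pd i g x) / (g x)\<^sup>2"
  using has_pd_divide[OF has_pd_pd[OF assms(1)] has_pd_pd[OF assms(2)] assms(3)] by (rule pd_eqI)

lemma pd_csqrt:
  assumes "C1_fun f" "\<And>y. f y \<notin> \<real>\<^sub>\<le>\<^sub>0"
  shows "pd i (\<lambda>y. csqrt (f y)) = (\<lambda>y. pd i f y / (2 * csqrt (f y)))"
  by (intro ext pd_eqI has_pd_csqrt[OF has_pd_pd[OF assms(1)] assms(2)])

lemma pd_pd_csqrt_divide_csqrt:
  assumes "C2_fun f" "\<And>y. f y \<notin> \<real>\<^sub>\<le>\<^sub>0"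
  shows "pd i (pd i (\<lambda>y. csqrt (f y))) x / csqrt (f x)
    = pd i (pd i f) x / (2 * f x) - (pd i f x)\<^sup>2 / (4 * (f x)\<^sup>2)"
proof -
  have C1: "C1_fun f" "C1_fun (pd i f)"
    using assms(1) unfolding C2_fun_def by auto
  define s where "s = csqrt (f x)"
  have s: "s \<noteq> 0" "s\<^sup>2 = f x"
    using assms(2)[of x] by (auto simp: s_def complex_nonpos_Reals_iff)
  have "has_pd (\<lambda>y. 2 * csqrt (f y)) i (2 * (pd i f x / (2 * s))) x"
    unfolding s_def using has_pd_csqrt[OF has_pd_pd[OF C1(1)] assms(2)]
    by (rule has_vector_derivative_mult_right)
  from has_pd_divide[OF has_pd_pd[OF C1(2)] this]
  have quotient: "pd i (\<lambda>y. pd i f y / (2 * csqrt (f y))) x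
      = (pd i (pd i f) x * (2 * s) - pd i f x * (2 * (pd i f x / (2 * s)))) / (2 * s)\<^sup>2"
    using s(1) unfolding s_def by (intro pd_eqI) simp
  have algebra: "((a * (2 * s) - p * (2 * (p / (2 * s)))) / (2 * s)\<^sup>2) / s
      = a / (2 * f x) - p\<^sup>2 / (4 * (f x)\<^sup>2)" for a p
    unfolding s(2)[symmetric] using s(1) by (simp add: field_simps power2_eq_square)
  show ?thesis
    unfolding pd_csqrt[OF C1(1) assms(2)] quotient s_def[symmetric] by (rule algebra)
qed

lemma ball_subset_cubeC: "ball 0 pi \<subseteq> cubeC"
proof
  fix x :: "real^3"
  assume "x \<in> ball 0 pi"
  then have "\<bar>x $ i\<bar> < pi" for i
    using component_le_norm_cart[of x i] by simp
  then show "x \<in> cubeC"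
    unfolding cubeC_def mem_box_cart by (auto simp: abs_less_iff minus_less_iff)
qed

lemma corner_in_cubeC_outside_ball: "(\<chi> i. 3) \<in> cubeC - ball 0 pi"
proof -
  have "pi < sqrt 27"
    using pi_less_4 real_less_rsqrt[of 4 27] by simp
  then have "(\<chi> i. 3) \<notin> ball (0 :: real^3) pi"
    by (simp add: norm_vec_def L2_set_def sum_3)
  moreover have "(\<chi> i. 3) \<in> cubeC"
    unfolding cubeC_def mem_box_cart using pi_gt3 by simp
  ultimately show ?thesis
    by blast
qed

lemma admissible_eq_1_outside_ball:
  assumes "admissible \<alpha> b n" "y \<notin> ball 0 pi"
  shows "n y = 1"
proof -
  have "{x. n x \<noteq> 1} \<subseteq> ball 0 pi"
    using assms(1) closure_subset[of "{x. n x \<noteq> 1}"] unfolding admissible_def by blast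
  then show ?thesis
    using assms(2) by blast
qed

lemma admissible_le_1:
  assumes "admissible \<alpha> b n"
  shows "b \<le> 1"
proof -
  have "n (\<chi> i. 3) = 1"
    using admissible_eq_1_outside_ball[OF assms] corner_in_cubeC_outside_ball by blast
  moreover have "b \<le> Re (n (\<chi> i. 3))"
    using assms unfolding admissible_def by blast
  ultimately show ?thesis
    by simp
qed

lemma admissible_not_nonpos_Reals:
  assumes "admissible \<alpha> b n" "0 < b"
  shows "n y \<notin> \<real>\<^sub>\<le>\<^sub>0"
proof -
  have "b \<le> Re (n y)"
    using assms(1) unfolding admissible_def by blast
  then show ?thesis
    using assms(2) unfolding complex_nonpos_Reals_iff by linarith
qed

lemma admissible_norm_inverse_le:
  assumes "admissible \<alpha> b n" "0 < b"
  shows "cmod (inverse (n y)) \<le> 1 / b"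
proof -
  have "b \<le> cmod (n y)"
    using assms(1) complex_Re_le_cmod[of "n y"] unfolding admissible_def by (meson order_trans)
  then show ?thesis
    unfolding inverse_eq_divide norm_divide norm_one
    using assms(2) by (intro divide_left_mono) (auto simp: zero_less_mult_iff)
qed

lemma Hm_norm_nonneg: "0 \<le> Hm_norm m f"
  unfolding Hm_norm_def Hm_weight_def by (simp add: infsum_nonneg)

lemma sobolev_const_bounds:
  assumes "sobolev_const m L" "in_Hm m f" "C2_fun f" "Hm_norm m f \<le> C" "0 \<le> L" "x \<in> cubeC"
  shows "cmod (f x) \<le> L * C" "cmod (pd i f x) \<le> L * C" "cmod (pd i (pd j f) x) \<le> L * C"
proof -
  have "\<forall>x\<in>cubeC. cmod (f x) \<le> L * Hm_norm m f \<and> (\<forall>i. cmod (pd i f x) \<le> L * Hm_norm m f) \<and>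
      (\<forall>i j. cmod (pd i (pd j f) x) \<le> L * Hm_norm m f)"
    using assms(1-3) unfolding sobolev_const_def by blast
  then have "cmod (f x) \<le> L * Hm_norm m f" "cmod (pd i f x) \<le> L * Hm_norm m f"
    "cmod (pd i (pd j f) x) \<le> L * Hm_norm m f"
    using assms(6) by blast+
  moreover have "L * Hm_norm m f \<le> L * C"
    using assms(4,5) by (rule mult_left_mono)
  ultimately show "cmod (f x) \<le> L * C" "cmod (pd i f x) \<le> L * C" "cmod (pd i (pd j f) x) \<le> L * C"
    by linarith+
qed

lemma sobolev_const_ge_1:
  assumes "sobolev_const m L" "admissible \<alpha> b n" "in_Hm m n" "C2_fun n"
  shows "1 \<le> L * Hm_norm m n"
proof -
  have "n (\<chi> i. 3) = 1" "(\<chi> i. 3) \<in> cubeC"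
    using admissible_eq_1_outside_ball[OF assms(2)] corner_in_cubeC_outside_ball by blast+
  moreover have "\<forall>x\<in>cubeC. cmod (n x) \<le> L * Hm_norm m n"
    using assms(1,3,4) unfolding sobolev_const_def by blast
  ultimately have "cmod (n (\<chi> i. 3)) \<le> L * Hm_norm m n"
    by blast
  with \<open>n (\<chi> i. 3) = 1\<close> show ?thesis
    by simp
qed

lemma sobolev_const_nonneg:
  assumes "sobolev_const m L" "admissible \<alpha> b n" "in_Hm m n" "C2_fun n"
  shows "0 \<le> L"
  using sobolev_const_ge_1[OF assms] Hm_norm_nonneg[of m n]
    mult_nonpos_nonneg[of L "Hm_norm m n"] by linarith

lemma norm_quotient_rule_le:
  fixes a p q z :: complex
  assumes "cmod a \<le> M" "cmod p \<le> M" "cmod q \<le> M" "cmod (inverse z) \<le> \<beta>"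
  shows "cmod ((a * z - p * q) / z\<^sup>2) \<le> M * \<beta> + M\<^sup>2 * \<beta>\<^sup>2"
proof -
  have "(a * z - p * q) / z\<^sup>2 = a * inverse z - p * q * (inverse z)\<^sup>2"
    by (cases "z = 0") (simp_all add: field_simps power2_eq_square)
  also have "cmod \<dots> \<le> cmod a * cmod (inverse z) + cmod p * cmod q * (cmod (inverse z))\<^sup>2"
    by (rule order_trans[OF norm_triangle_ineq4]) (simp add: norm_mult norm_power)
  also have "\<dots> \<le> M * \<beta> + M\<^sup>2 * \<beta>\<^sup>2"
    using assms unfolding power2_eq_square
    by (intro add_mono mult_mono) (auto intro: order_trans[OF norm_ge_zero])
  finally show ?thesis .
qed

lemma norm_csqrt_laplacian_term_le:
  fixes a p z :: complex
  assumes "cmod a \<le> M" "cmod p \<le> M" "cmod (inverse z) \<le> \<beta>"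
  shows "cmod (a / (2 * z) - p\<^sup>2 / (4 * z\<^sup>2)) \<le> M * \<beta> / 2 + M\<^sup>2 * \<beta>\<^sup>2 / 4"
proof -
  have "a / (2 * z) - p\<^sup>2 / (4 * z\<^sup>2) = a * inverse z / 2 - p\<^sup>2 * (inverse z)\<^sup>2 / 4"
    by (simp add: field_simps power2_eq_square)
  also have "cmod \<dots> \<le> cmod a * cmod (inverse z) / 2 + (cmod p)\<^sup>2 * (cmod (inverse z))\<^sup>2 / 4"
    by (rule order_trans[OF norm_triangle_ineq4]) (simp add: norm_mult norm_power norm_divide)
  also have "\<dots> \<le> M * \<beta> / 2 + M\<^sup>2 * \<beta>\<^sup>2 / 4"
    using assms by (intro add_mono divide_right_mono mult_mono power_mono)
      (auto intro: order_trans[OF norm_ge_zero])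
  finally show ?thesis .
qed

lemma norm_inverse_csqrt_le:
  assumes "cmod (inverse z) \<le> \<beta>" "1 \<le> \<beta>"
  shows "cmod (inverse (csqrt z)) \<le> \<beta>"
proof -
  have "cmod (inverse (csqrt z)) = sqrt (cmod (inverse z))"
    by (simp add: norm_inverse real_sqrt_inverse)
  also have "\<dots> \<le> sqrt \<beta>"
    using assms(1) by simp
  also have "\<dots> \<le> \<beta>"
    using assms(2) by (simp add: real_sqrt_le_iff' power2_eq_square)
  finally show ?thesis .
qed

lemma block_bounds_sum_le:
  fixes \<kappa> M \<beta> :: real
  assumes "0 \<le> \<kappa>" "1 \<le> M" "1 \<le> \<beta>"
  shows "2 * (\<kappa>\<^sup>2 * (1 + M)) + 3 * (M * \<beta> + M\<^sup>2 * \<beta>\<^sup>2) + 3 * (M * \<beta> / 2 + M\<^sup>2 * \<beta>\<^sup>2 / 4)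
      + 6 * (\<kappa> * \<beta>) * M \<le> 15 * (1 + \<kappa>\<^sup>2) * \<beta>\<^sup>2 * M\<^sup>2"
proof -
  define P where "P = M * \<beta>"
  have "M \<le> P" "1 \<le> P"
    using assms mult_left_mono[of 1 \<beta> M] mult_mono[of 1 M 1 \<beta>] by (auto simp: P_def)
  then have P2: "P \<le> P\<^sup>2" "M \<le> P\<^sup>2" "1 \<le> P\<^sup>2"
    by (auto simp: power2_eq_square intro: order_trans[OF _ mult_right_mono[of 1 P P]])
  have AM_GM: "2 * \<kappa> \<le> 1 + \<kappa>\<^sup>2"
    using sum_squares_ge_zero[of "\<kappa> - 1" 0] by (simp add: power2_eq_square algebra_simps)
  have "\<kappa> * P * 2 \<le> P\<^sup>2 + \<kappa>\<^sup>2 * P\<^sup>2"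
    using mult_mono[OF AM_GM P2(1)] \<open>1 \<le> P\<close> by (simp add: algebra_simps)
  moreover have "\<kappa>\<^sup>2 * M \<le> \<kappa>\<^sup>2 * P\<^sup>2" "\<kappa>\<^sup>2 \<le> \<kappa>\<^sup>2 * P\<^sup>2"
    using mult_left_mono[OF P2(2), of "\<kappa>\<^sup>2"] mult_left_mono[OF P2(3), of "\<kappa>\<^sup>2"] by simp_all
  moreover have "0 \<le> \<kappa>\<^sup>2 * P\<^sup>2"
    by simp
  moreover have "2 * (\<kappa>\<^sup>2 * (1 + M)) + 3 * (M * \<beta> + M\<^sup>2 * \<beta>\<^sup>2) + 3 * (M * \<beta> / 2 + M\<^sup>2 * \<beta>\<^sup>2 / 4)
      + 6 * (\<kappa> * \<beta>) * M = 2 * \<kappa>\<^sup>2 + 2 * (\<kappa>\<^sup>2 * M) + 9 / 2 * P + 15 / 4 * P\<^sup>2 + 3 * (\<kappa> * P * 2)"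
    "15 * (1 + \<kappa>\<^sup>2) * \<beta>\<^sup>2 * M\<^sup>2 = 15 * P\<^sup>2 + 15 * (\<kappa>\<^sup>2 * P\<^sup>2)"
    by (simp_all add: P_def algebra_simps)
  ultimately show ?thesis
    using P2 by linarith
qed

lemma Q_spec_norm_le_blocks:
  fixes n :: "real^3 \<Rightarrow> complex"
  assumes J: "\<And>k j. cmod (jac (\<lambda>y. \<chi> k. grad n y $ k / n y) x $ k $ j) \<le> KJ"
    and N: "\<And>k j. cmod (crossmat (grad n x) $ k $ j) \<le> KN"
  shows "Q_spec_norm \<kappa> n x
    \<le> 2 * cmod (complex_of_real (\<kappa>\<^sup>2) * (1 - n x)) + 3 * KJ
      + cmod (laplace (\<lambda>y. csqrt (n y)) x / csqrt (n x))
      + 6 * cmod (\<i> * complex_of_real \<kappa> / csqrt (n x)) * KN"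
proof -
  define d where "d = complex_of_real (\<kappa>\<^sup>2) * (1 - n x)"
  define c where "c = \<i> * complex_of_real \<kappa> / csqrt (n x)"
  define l where "l = laplace (\<lambda>y. csqrt (n y)) x / csqrt (n x)"
  define A where "A = - jac (\<lambda>y. \<chi> k. grad n y $ k / n y) x"
  define N where "N = crossmat (grad n x)"
  have KJ: "0 \<le> KJ" and KN: "0 \<le> KN"
    using J[of 1 1] N[of 1 1] norm_ge_zero order_trans by blast+
  have A: "norm (A *v E) \<le> 3 * KJ * norm E" for E
    using J by (intro norm_matrix3_vector_mult_le) (simp add: A_def)
  have cN: "norm ((\<chi> k l. c * N $ k $ l) *v E) \<le> 3 * (cmod c * KN) * norm E"
    "norm ((\<chi> k l. - c * N $ k $ l) *v E) \<le> 3 * (cmod c * KN) * norm E" for E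
    using N by (intro norm_matrix3_vector_mult_le; simp add: N_def norm_mult mult_left_mono)+
  have A11: "norm ((mat d + (A + mat l)) *v E) \<le> (cmod d + 3 * KJ + cmod l) * norm E" for E
  proof -
    have "norm ((mat d + (A + mat l)) *v E) \<le> norm (mat d *v E) + norm (A *v E) + norm (mat l *v E)"
      unfolding matrix_vector_mult_add_rdistrib by (smt (verit) norm_triangle_ineq)
    then show ?thesis
      using A[of E] by (simp add: norm_mat_mult_vec distrib_right)
  qed
  show ?thesis
    unfolding Q_spec_norm_def d_def[symmetric] c_def[symmetric] l_def[symmetric]
  proof (rule onorm_le)
    fix p :: "(complex^3) \<times> (complex^3)"
    obtain E H where p: "p = (E, H)"
      by fastforce
    have "Qop \<kappa> n x p = ((mat d + (A + mat l)) *v E + (\<chi> k l. - c * N $ k $ l) *v H,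
        (\<chi> k l. c * N $ k $ l) *v E + mat d *v H)"
      unfolding p Qop_def Let_def d_def c_def l_def A_def N_def by simp
    also have "norm \<dots>
        \<le> ((cmod d + 3 * KJ + cmod l) + 3 * (cmod c * KN) + 3 * (cmod c * KN) + cmod d) * norm p"
      unfolding p using KJ KN
      by (intro norm_block_le A11 cN) (simp_all add: norm_mat_mult_vec)
    finally show "norm (Qop \<kappa> n x p) \<le> (2 * cmod d + 3 * KJ + cmod l + 6 * cmod c * KN) * norm p"
      by (simp add: algebra_simps)
  qed
qed

lemma Q_spec_norm_le:
  fixes n :: "real^3 \<Rightarrow> complex"
  assumes C2: "C2_fun n" and slit: "\<And>y. n y \<notin> \<real>\<^sub>\<le>\<^sub>0"
    and "0 \<le> \<kappa>" "1 \<le> M" "1 \<le> \<beta>"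
    and n: "cmod (n x) \<le> M" and dn: "\<And>i. cmod (pd i n x) \<le> M"
    and ddn: "\<And>i j. cmod (pd i (pd j n) x) \<le> M"
    and inv: "cmod (inverse (n x)) \<le> \<beta>"
  shows "Q_spec_norm \<kappa> n x \<le> 15 * (1 + \<kappa>\<^sup>2) * \<beta>\<^sup>2 * M\<^sup>2"
proof -
  have C1: "C1_fun n" "\<And>k. C1_fun (pd k n)"
    using C2 unfolding C2_fun_def by auto
  have "n x \<noteq> 0"
    using slit[of x] by auto
  have J: "cmod (jac (\<lambda>y. \<chi> k. grad n y $ k / n y) x $ k $ j) \<le> M * \<beta> + M\<^sup>2 * \<beta>\<^sup>2" for k j
    unfolding jac_def grad_def using C1 \<open>n x \<noteq> 0\<close>
    by (simp add: pd_divide norm_quotient_rule_le ddn dn inv)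
  have N: "cmod (crossmat (grad n x) $ k $ j) \<le> M" for k j
    unfolding crossmat_def grad_def using dn \<open>1 \<le> M\<close> by simp
  have "cmod (laplace (\<lambda>y. csqrt (n y)) x / csqrt (n x))
      \<le> (\<Sum>i\<in>UNIV. cmod (pd i (pd i (\<lambda>y. csqrt (n y))) x / csqrt (n x)))"
    unfolding laplace_def sum_divide_distrib by (rule norm_sum)
  also have "\<dots> \<le> (\<Sum>i\<in>(UNIV :: 3 set). M * \<beta> / 2 + M\<^sup>2 * \<beta>\<^sup>2 / 4)"
    unfolding pd_pd_csqrt_divide_csqrt[OF C2 slit]
    by (intro sum_mono norm_csqrt_laplacian_term_le ddn dn inv)
  finally have l: "cmod (laplace (\<lambda>y. csqrt (n y)) x / csqrt (n x))
      \<le> 3 * (M * \<beta> / 2 + M\<^sup>2 * \<beta>\<^sup>2 / 4)"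
    by simp
  have d: "cmod (complex_of_real (\<kappa>\<^sup>2) * (1 - n x)) \<le> \<kappa>\<^sup>2 * (1 + M)"
    using norm_triangle_ineq4[of 1 "n x"] n
    by (simp only: norm_mult norm_of_real) (simp add: mult_left_mono)
  have c: "cmod (\<i> * complex_of_real \<kappa> / csqrt (n x)) \<le> \<kappa> * \<beta>"
    using norm_inverse_csqrt_le[OF inv \<open>1 \<le> \<beta>\<close>] \<open>0 \<le> \<kappa>\<close>
    by (simp add: norm_mult divide_inverse mult_left_mono)
  have "Q_spec_norm \<kappa> n x \<le> 2 * (\<kappa>\<^sup>2 * (1 + M)) + 3 * (M * \<beta> + M\<^sup>2 * \<beta>\<^sup>2)
      + 3 * (M * \<beta> / 2 + M\<^sup>2 * \<beta>\<^sup>2 / 4) + 6 * (\<kappa> * \<beta>) * M"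
    using Q_spec_norm_le_blocks[OF J N, of \<kappa>] d l c \<open>1 \<le> M\<close>
      mult_right_mono[OF c, of M] by linarith
  then show ?thesis
    using block_bounds_sum_le[OF \<open>0 \<le> \<kappa>\<close> \<open>1 \<le> M\<close> \<open>1 \<le> \<beta>\<close>] by linarith
qed

theorem lemmaA2:
  fixes \<alpha>0 \<kappa> b m Cm Lm :: real and n :: "real^3 \<Rightarrow> complex"
  assumes "0 < \<alpha>0" and "\<alpha>0 < 1"
    and "\<kappa> > 0" and "b > 0" and "m > 7/2"
    and "sobolev_const m Lm"
    and "admissible \<alpha>0 b n" and "in_Hm m n" and "C2_fun n"
    and "Hm_norm m n \<le> Cm"
  shows "\<forall>x\<in>ball 0 pi. Q_spec_norm \<kappa> n x \<le> 15 * (1 + \<kappa>\<^sup>2) * b powr (-2) * (Lm * Cm)\<^sup>2"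
proof
  fix x :: "real^3"
  assume "x \<in> ball 0 pi"
  then have "x \<in> cubeC"
    using ball_subset_cubeC by blast
  have "0 \<le> Lm"
    using sobolev_const_nonneg assms(6-9) by blast
  then have "1 \<le> Lm * Cm"
    using sobolev_const_ge_1[OF assms(6-9)] mult_left_mono[OF assms(10), of Lm] by linarith
  note bounds = sobolev_const_bounds[OF assms(6,8,9,10) \<open>0 \<le> Lm\<close> \<open>x \<in> cubeC\<close>]
  have "1 \<le> 1 / b"
    using admissible_le_1[OF assms(7)] assms(4) by simp
  then have "Q_spec_norm \<kappa> n x \<le> 15 * (1 + \<kappa>\<^sup>2) * (1 / b)\<^sup>2 * (Lm * Cm)\<^sup>2"
    using Q_spec_norm_le[OF assms(9) admissible_not_nonpos_Reals[OF assms(7,4)] _ \<open>1 \<le> Lm * Cm\<close> _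
        bounds admissible_norm_inverse_le[OF assms(7,4)]] assms(3)
    by simp
  moreover have "b powr (-2) = (1 / b)\<^sup>2"
    using assms(4) by (simp add: powr_minus_divide powr_realpow power_one_over)
  ultimately show "Q_spec_norm \<kappa> n x \<le> 15 * (1 + \<kappa>\<^sup>2) * b powr (-2) * (Lm * Cm)\<^sup>2"
    by simp
qed

end
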